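(* Let $G$ be a finite group with identity $e$, and let $\mathcal{B}$ be the set of bases of a rank-$3$ matroid on ground set $G$ invariant under left multiplication by $G$. Let $g\in G$ with $e,g,g^2$ pairwise distinct, and let $k\ge 2$ be an integer with $g^k\notin\{e,g\}$. If $f_{g,g^k}\subseteq\mathcal{B}$, then $f_{g,g^2}\subseteq\mathcal{B}$.
   Context: $G$ acts on $\binom{G}{3}$ by $x\cdot\{a,b,c\}=\{xa,xb,xc\}$. For $g,h\in G$ with $e,g,h$ pairwise distinct, $f_{g,h}=\{\{a,ag,ah\}\mid a\in G\}$ (a $G$-orbit, with $f_{g,h}=f_{h,g}$). A matroid on ground set $G$ is invariant if its set of bases is preserved by this action. *)

theory Defs
  imports "HOL-Algebra.Group"
begin

definition matroid_bases :: "'a set \<Rightarrow> 'a set set \<Rightarrow> bool" where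
  "matroid_bases E \<B> \<longleftrightarrow>
     finite E \<and> \<B> \<subseteq> Pow E \<and> \<B> \<noteq> {} \<and>
     (\<forall>B1\<in>\<B>. \<forall>B2\<in>\<B>. \<forall>x\<in>B1 - B2. \<exists>y\<in>B2 - B1. insert y (B1 - {x}) \<in> \<B>)"

definition matroid_rank_bases :: "'a set \<Rightarrow> 'a set set \<Rightarrow> nat \<Rightarrow> bool" where
  "matroid_rank_bases E \<B> r \<longleftrightarrow> matroid_bases E \<B> \<and> (\<forall>B\<in>\<B>. card B = r)"

definition left_invariant :: "('a, 'b) monoid_scheme \<Rightarrow> 'a set set \<Rightarrow> bool" where
  "left_invariant G \<B> \<longleftrightarrow>
     (\<forall>x\<in>carrier G. (\<lambda>S. (\<lambda>a. x \<otimes>\<^bsub>G\<^esub> a) ` S) ` \<B> = \<B>)"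

definition orbit_f :: "('a, 'b) monoid_scheme \<Rightarrow> 'a \<Rightarrow> 'a \<Rightarrow> 'a set set" where
  "orbit_f G g h = {{a, a \<otimes>\<^bsub>G\<^esub> g, a \<otimes>\<^bsub>G\<^esub> h} | a. a \<in> carrier G}"

end

theory Submission
  imports Defs
begin

text \<open>Call a 3-set dependent if it is not a basis. If \<open>{\<one>, g, g^2}\<close> were dependent, left
  translation by \<open>g^n\<close> would make every \<open>{g^n, g^(n+1), g^(n+2)}\<close> dependent. The pair \<open>{g, g^2}\<close>
  is independent, since it lies in the basis \<open>g{\<one>, g, g^k}\<close>, and in a rank-3 matroid two
  dependent triples through a common independent pair lie on a common line; so by induction
  every \<open>{\<one>, g, g^n}\<close> is dependent, contradicting that \<open>{\<one>, g, g^k}\<close> is a basis.\<close>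

lemma rank3_basis_extends_pair:
  assumes M: "matroid_rank_bases E \<B> 3" and B2: "B2 \<in> \<B>"
    and bc: "b \<in> B2" "c \<in> B2" "b \<noteq> c" and B: "B \<in> \<B>"
  shows "\<exists>z\<in>B. z \<notin> {b, c} \<and> {z, b, c} \<in> \<B>"
proof -
  have "card B2 = 3" using M B2 unfolding matroid_rank_bases_def by auto
  moreover from this have "finite B2" by (simp add: card_ge_0_finite)
  ultimately have "card (B2 - {b, c}) = 1" using bc by (simp add: card_Diff_subset)
  then obtain y where "B2 - {b, c} = {y}" by (auto simp: card_Suc_eq)
  then have B2_eq: "B2 = {y, b, c}" and y: "y \<notin> {b, c}" using bc by auto
  show ?thesis
  proof (cases "y \<in> B")
    case True
    then show ?thesis using y B2 B2_eq by auto
  next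
    case False
    have "\<forall>B1\<in>\<B>. \<forall>B2\<in>\<B>. \<forall>x\<in>B1 - B2. \<exists>y\<in>B2 - B1. insert y (B1 - {x}) \<in> \<B>"
      using M unfolding matroid_rank_bases_def matroid_bases_def by auto
    then obtain w where "w \<in> B - B2" "insert w (B2 - {y}) \<in> \<B>"
      using B2 B False B2_eq by (metis DiffI insertCI)
    moreover have "B2 - {y} = {b, c}" using B2_eq y by auto
    ultimately show ?thesis using B2_eq by auto
  qed
qed

lemma rank3_nonbasis_trans:
  assumes M: "matroid_rank_bases E \<B> 3" and B2: "B2 \<in> \<B>"
    and bc: "b \<in> B2" "c \<in> B2" "b \<noteq> c"
    and abc: "{a, b, c} \<notin> \<B>" and bcx: "{b, c, x} \<notin> \<B>"
  shows "{a, b, x} \<notin> \<B>"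
proof
  assume "{a, b, x} \<in> \<B>"
  then obtain z where "z \<in> {a, b, x}" "z \<notin> {b, c}" "{z, b, c} \<in> \<B>"
    using rank3_basis_extends_pair[OF M B2 bc] by blast
  then show False using abc bcx by (auto simp: insert_commute)
qed

context group
begin

lemma left_invariant_image:
  assumes "left_invariant G \<B>" "x \<in> carrier G" "S \<in> \<B>"
  shows "(\<lambda>a. x \<otimes> a) ` S \<in> \<B>"
  using assms unfolding left_invariant_def by blast

lemma left_invariant_image_iff:
  assumes LI: "left_invariant G \<B>" and x: "x \<in> carrier G" and S: "S \<subseteq> carrier G"
  shows "(\<lambda>a. x \<otimes> a) ` S \<in> \<B> \<longleftrightarrow> S \<in> \<B>"
proof
  assume "(\<lambda>a. x \<otimes> a) ` S \<in> \<B>"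
  then have "(\<lambda>a. inv x \<otimes> a) ` (\<lambda>a. x \<otimes> a) ` S \<in> \<B>"
    using left_invariant_image[OF LI] x by simp
  moreover have "(\<lambda>a. inv x \<otimes> a) ` (\<lambda>a. x \<otimes> a) ` S = S"
    unfolding image_image using x S by (auto simp: m_assoc[symmetric] intro!: image_eqI)
  ultimately show "S \<in> \<B>" by simp
qed (rule left_invariant_image[OF LI x])

lemma orbit_f_subset_iff:
  assumes LI: "left_invariant G \<B>" and gh: "g \<in> carrier G" "h \<in> carrier G"
  shows "orbit_f G g h \<subseteq> \<B> \<longleftrightarrow> {\<one>, g, h} \<in> \<B>"
proof
  assume "orbit_f G g h \<subseteq> \<B>"
  moreover have "{\<one>, \<one> \<otimes> g, \<one> \<otimes> h} \<in> orbit_f G g h" unfolding orbit_f_def by blast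
  ultimately show "{\<one>, g, h} \<in> \<B>" using gh by auto
next
  assume base: "{\<one>, g, h} \<in> \<B>"
  show "orbit_f G g h \<subseteq> \<B>"
  proof
    fix S assume "S \<in> orbit_f G g h"
    then obtain a where a: "a \<in> carrier G" and S: "S = {a, a \<otimes> g, a \<otimes> h}"
      unfolding orbit_f_def by blast
    have "(\<lambda>x. a \<otimes> x) ` {\<one>, g, h} = S" using a S by simp
    then show "S \<in> \<B>" using left_invariant_image[OF LI a base] by simp
  qed
qed

lemma nonbasis_propagates_along_powers:
  fixes n :: nat
  assumes M: "matroid_rank_bases E \<B> 3" and LI: "left_invariant G \<B>" and g: "g \<in> carrier G"
    and pair: "B2 \<in> \<B>" "g \<in> B2" "g [^] (2::nat) \<in> B2" "g \<noteq> g [^] (2::nat)"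
    and dep: "{\<one>, g, g [^] (2::nat)} \<notin> \<B>"
  shows "{\<one>, g, g [^] n} \<notin> \<B>"
proof (induction n)
  case 0
  have "card {\<one>, g, g [^] (0::nat)} \<noteq> 3" by (simp add: card_insert_if)
  then show ?case using M unfolding matroid_rank_bases_def by blast
next
  case (Suc n)
  have shift: "(\<lambda>a. g \<otimes> a) ` {\<one>, g, g [^] n} = {g, g [^] (2::nat), g [^] Suc n}"
    using g by (simp add: nat_pow_Suc2 numeral_2_eq_2 del: nat_pow_Suc Group.nat_pow_Suc)
  have "(\<lambda>a. g \<otimes> a) ` {\<one>, g, g [^] n} \<notin> \<B>"
    using Suc.IH left_invariant_image_iff[OF LI g, of "{\<one>, g, g [^] n}"] g by simp
  then have "{g, g [^] (2::nat), g [^] Suc n} \<notin> \<B>" unfolding shift .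
  then show ?case using rank3_nonbasis_trans[OF M pair dep] by simp
qed

lemma square_basis_if_power_basis:
  fixes k :: nat
  assumes M: "matroid_rank_bases E \<B> 3" and LI: "left_invariant G \<B>" and g: "g \<in> carrier G"
    and g2: "g \<noteq> g [^] (2::nat)" and Bk: "{\<one>, g, g [^] k} \<in> \<B>"
  shows "{\<one>, g, g [^] (2::nat)} \<in> \<B>"
proof -
  have "(\<lambda>a. g \<otimes> a) ` {\<one>, g, g [^] k} = {g, g [^] (2::nat), g \<otimes> g [^] k}"
    using g by (simp add: numeral_2_eq_2)
  then have B2: "{g, g [^] (2::nat), g \<otimes> g [^] k} \<in> \<B>"
    using left_invariant_image[OF LI g Bk] by simp
  show ?thesis
    using nonbasis_propagates_along_powers[OF M LI g B2 _ _ g2, of k] Bk by auto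
qed

end

theorem mainTheorem10:
  fixes G :: "('a, 'b) monoid_scheme" and \<B> :: "'a set set" and g :: 'a and k :: nat
  assumes "group G" and "finite (carrier G)"
    and "matroid_rank_bases (carrier G) \<B> 3"
    and "left_invariant G \<B>"
    and "g \<in> carrier G"
    and "\<one>\<^bsub>G\<^esub> \<noteq> g" and "\<one>\<^bsub>G\<^esub> \<noteq> g [^]\<^bsub>G\<^esub> (2::nat)" and "g \<noteq> g [^]\<^bsub>G\<^esub> (2::nat)"
    and "k \<ge> 2"
    and "g [^]\<^bsub>G\<^esub> k \<notin> {\<one>\<^bsub>G\<^esub>, g}"
    and "orbit_f G g (g [^]\<^bsub>G\<^esub> k) \<subseteq> \<B>"
  shows "orbit_f G g (g [^]\<^bsub>G\<^esub> (2::nat)) \<subseteq> \<B>"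
proof -
  interpret group G by fact
  note orbit_iff = orbit_f_subset_iff[OF assms(4,5)]
  have "{\<one>\<^bsub>G\<^esub>, g, g [^]\<^bsub>G\<^esub> k} \<in> \<B>"
    using assms(11) orbit_iff assms(5) by simp
  then have "{\<one>\<^bsub>G\<^esub>, g, g [^]\<^bsub>G\<^esub> (2::nat)} \<in> \<B>"
    using square_basis_if_power_basis[OF assms(3,4,5,8)] by blast
  then show ?thesis using orbit_iff assms(5) by simp
qed

end
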